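(* Assume $\tau_1\le\dots\le\tau_m$, let $f$ be the canonical flow and $T>0$. Then $M_T(f)=\max\{T_i(T): i\in S(T)\}$, where $S(T)=\{i\in[m]:T_i(T)=\min_{j\in[m]}T_j(T)\}$.
   Context: Parallel-link dynamic flow model. Fix $m\in\mathbb N$, capacities $\nu_1,\dots,\nu_m\in\mathbb Q_{>0}$ and an inflow rate $u\in\mathbb Q_{>0}$; $[m]=\{1,\dots,m\}$, $[x]^+=\max\{x,0\}$. A flow is a family $f=(f_i)_{i\in[m]}$ of measurable $f_i:\mathbb R_{\ge0}\to\mathbb R_{\ge0}$ with $\sum_i f_i(\theta)=u$ for a.e. $\theta\ge0$. The queue length $z_i(\theta)$ of link $i$ is the absolutely continuous function with $z_i(0)=0$ and, for a.e. $\theta$, $z_i'(\theta)=f_i(\theta)-\nu_i$ if $z_i(\theta)>0$ and $z_i'(\theta)=[f_i(\theta)-\nu_i]^+$ if $z_i(\theta)=0$. Given travel times $\tau\in\mathbb R^m_{\ge0}$, the exit time of link $i$ at time $\theta$ is $T_i(\theta)=\theta+z_i(\theta)/\nu_i+\tau_i$. For a time horizon $T>0$ the makespan of $f$ is $M_T(f)=\sup\{T_i(\theta):\theta\in[0,T], i\in[m]\text{ with }f_i(\theta)>0\}$. Canonical flow (for $\tau_1\le\dots\le\tau_m$): $\bar\nu(i)=\sum_{j=1}^i\nu_j$, $\bar\nu(0)=0$; $\theta^*_1=0$ and for $i=1,\dots,m-1$, $\theta^*_{i+1}=\theta^*_i+\frac{\bar\nu(i)}{u-\bar\nu(i)}(\tau_{i+1}-\tau_i)$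 if $\bar\nu(i)<u$ and $\theta^*_{i+1}=\infty$ otherwise; $\theta^*_{m+1}=\infty$. Let $k=\max\{j\in\{0,\dots,m\}:\bar\nu(j)<u\}$. Define $f_i(\theta)=\frac{u}{\bar\nu(j)}\nu_i$ if $i\le k$ and $\theta\in[\theta^*_j,\theta^*_{j+1})$ for some $j\in\{i,\dots,k\}$; $f_i(\theta)=\nu_i$ if $i\le k$ and $\theta\ge\theta^*_{k+1}$; $f_{k+1}(\theta)=u-\bar\nu(k)$ if $k<m$ and $\theta\ge\theta^*_{k+1}$; $f_i(\theta)=0$ otherwise. *)

theory Defs
  imports "HOL-Analysis.Analysis"
begin

text \<open>Parallel-link dynamic flow model. Links are indexed by 1..m; capacities nu,
  free-flow travel times tau (functions on nat), inflow rate u.\<close>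

definition nubar :: "(nat \<Rightarrow> real) \<Rightarrow> nat \<Rightarrow> real" where
  "nubar nu i = (\<Sum>j=1..i. nu j)"

definition abs_cont_on :: "real \<Rightarrow> real \<Rightarrow> (real \<Rightarrow> real) \<Rightarrow> bool" where
  "abs_cont_on a b g \<longleftrightarrow>
     (\<forall>\<epsilon>>0. \<exists>\<delta>>0. \<forall>(n::nat) (s::nat \<Rightarrow> real) (t::nat \<Rightarrow> real).
        (\<forall>i<n. a \<le> s i \<and> s i \<le> t i \<and> t i \<le> b) \<and>
        (\<forall>i<n. \<forall>j<n. i \<noteq> j \<longrightarrow> t i \<le> s j \<or> t j \<le> s i) \<and>
        (\<Sum>i<n. t i - s i) < \<delta>
        \<longrightarrow> (\<Sum>i<n. \<bar>g (t i) - g (s i)\<bar>) < \<epsilon>)"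

definition is_queue :: "real \<Rightarrow> (real \<Rightarrow> real) \<Rightarrow> (real \<Rightarrow> real) \<Rightarrow> bool" where
  "is_queue c g z \<longleftrightarrow>
     z 0 = 0 \<and> (\<forall>\<theta>\<ge>0. z \<theta> \<ge> 0) \<and> (\<forall>b\<ge>0. abs_cont_on 0 b z) \<and>
     (AE \<theta> in lborel. 0 < \<theta> \<longrightarrow>
        ((z \<theta> > 0 \<longrightarrow> (z has_real_derivative (g \<theta> - c)) (at \<theta>)) \<and>
         (z \<theta> = 0 \<longrightarrow> (z has_real_derivative (max (g \<theta> - c) 0)) (at \<theta>))))"

definition exit_time ::
  "(nat \<Rightarrow> real) \<Rightarrow> (nat \<Rightarrow> real) \<Rightarrow> (nat \<Rightarrow> real \<Rightarrow> real) \<Rightarrow> nat \<Rightarrow> real \<Rightarrow> real" where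
  "exit_time nu tau z i \<theta> = \<theta> + z i \<theta> / nu i + tau i"

definition makespan ::
  "nat \<Rightarrow> (nat \<Rightarrow> real) \<Rightarrow> (nat \<Rightarrow> real) \<Rightarrow> (nat \<Rightarrow> real \<Rightarrow> real) \<Rightarrow>
   (nat \<Rightarrow> real \<Rightarrow> real) \<Rightarrow> real \<Rightarrow> ereal" where
  "makespan m nu tau f z T =
     Sup {ereal (exit_time nu tau z i \<theta>) | i \<theta>. i \<in> {1..m} \<and> \<theta> \<in> {0..T} \<and> f i \<theta> > 0}"

fun theta_star :: "nat \<Rightarrow> (nat \<Rightarrow> real) \<Rightarrow> (nat \<Rightarrow> real) \<Rightarrow> real \<Rightarrow> nat \<Rightarrow> ereal" where
  "theta_star m nu tau u 0 = 0"
| "theta_star m nu tau u (Suc 0) = 0"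
| "theta_star m nu tau u (Suc (Suc i)) =
     (if Suc i \<le> m - 1 \<and> nubar nu (Suc i) < u
      then theta_star m nu tau u (Suc i)
           + ereal (nubar nu (Suc i) / (u - nubar nu (Suc i)) * (tau (Suc (Suc i)) - tau (Suc i)))
      else \<infinity>)"

definition kidx :: "nat \<Rightarrow> (nat \<Rightarrow> real) \<Rightarrow> real \<Rightarrow> nat" where
  "kidx m nu u = (GREATEST j. j \<le> m \<and> nubar nu j < u)"

definition canonical_flow ::
  "nat \<Rightarrow> (nat \<Rightarrow> real) \<Rightarrow> (nat \<Rightarrow> real) \<Rightarrow> real \<Rightarrow> nat \<Rightarrow> real \<Rightarrow> real" where
  "canonical_flow m nu tau u i \<theta> =
     (let k = kidx m nu u; ts = theta_star m nu tau u in
      if 1 \<le> i \<and> i \<le> k \<and> (\<exists>j\<in>{i..k}. ts j \<le> ereal \<theta> \<and> ereal \<theta> < ts (Suc j))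
        then u / nubar nu (THE j. j \<in> {i..k} \<and> ts j \<le> ereal \<theta> \<and> ereal \<theta> < ts (Suc j)) * nu i
      else if 1 \<le> i \<and> i \<le> k \<and> ts (Suc k) \<le> ereal \<theta> then nu i
      else if i = Suc k \<and> k < m \<and> ts (Suc k) \<le> ereal \<theta> then u - nubar nu k
      else 0)"

end

theory Submission
  imports Defs
begin

text \<open>Under the canonical flow the links are opened in the order of their free-flow times, and at
  every time \<open>\<theta>\<close> all links in use have one common travel time \<open>D(\<theta>)\<close>: a continuous,
  nondecreasing, piecewise linear function with \<open>D(0) = \<tau>\<^sub>1\<close>. Hence \<open>\<nu>\<^sub>i (D(\<theta>) - \<tau>\<^sub>i)\<^sup>+\<close>
  solves the queue dynamics of link \<open>i\<close>, and it is the only solution: the squared difference of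
  two solutions is absolutely continuous and has almost everywhere a nonpositive derivative.
  So \<open>T\<^sub>i(\<theta>) = \<theta> + max (D(\<theta>)) \<tau>\<^sub>i\<close>. Every link carrying flow at \<open>\<theta> \<le> T\<close> has
  \<open>\<tau>\<^sub>i \<le> D(\<theta>)\<close> and therefore exits at \<open>\<theta> + D(\<theta>) \<le> T + D(T)\<close>, while link 1 always
  carries flow and has the minimal exit time \<open>T + D(T)\<close> at \<open>T\<close>; all links in \<open>S(T)\<close> share
  this exit time, which is therefore the makespan.\<close>

section \<open>Absolutely continuous functions\<close>

lemma disjoint_open_intervals_ordered:
  fixes s t s' t' :: real
  assumes "s < t" "s' < t'" "{s<..<t} \<inter> {s'<..<t'} = {}"
  shows "t \<le> s' \<or> t' \<le> s"
proof (rule ccontr)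
  assume "\<not> ?thesis"
  then have "(max s s' + min t t') / 2 \<in> {s<..<t} \<inter> {s'<..<t'}"
    using assms by auto
  then show False using assms by blast
qed

lemma division_of_real_intervalE:
  fixes \<D> :: "real set set"
  assumes "\<D> division_of S" "K \<in> \<D>"
  obtains u v where "K = {u..v}" "u \<le> v"
  using assms by (metis atLeastatMost_empty_iff box_real(2) division_ofD(3,4) linorder_not_le)

lemma abs_cont_onD:
  assumes "abs_cont_on a b g" "e > 0"
  obtains \<delta> where "\<delta> > 0" "\<And>(n::nat) s t. (\<forall>i<n. a \<le> s i \<and> s i \<le> t i \<and> t i \<le> b) \<Longrightarrow>
        (\<forall>i<n. \<forall>j<n. i \<noteq> j \<longrightarrow> t i \<le> s j \<or> t j \<le> s i) \<Longrightarrow>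
        (\<Sum>i<n. t i - s i) < \<delta> \<Longrightarrow> (\<Sum>i<n. \<bar>g (t i) - g (s i)\<bar>) < e"
proof -
  obtain \<delta> where "\<delta> > 0" and \<delta>: "\<forall>(n::nat) s t. (\<forall>i<n. a \<le> s i \<and> s i \<le> t i \<and> t i \<le> b) \<and>
        (\<forall>i<n. \<forall>j<n. i \<noteq> j \<longrightarrow> t i \<le> s j \<or> t j \<le> s i) \<and>
        (\<Sum>i<n. t i - s i) < \<delta> \<longrightarrow> (\<Sum>i<n. \<bar>g (t i) - g (s i)\<bar>) < e"
    using assms unfolding abs_cont_on_def by blast
  show thesis by (rule that[OF \<open>\<delta> > 0\<close>]) (use \<delta> in blast)
qed

lemma abs_cont_on_nondegenerate_division:
  assumes "abs_cont_on a b g" "e > 0"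
  obtains \<delta> where "\<delta> > 0"
    "\<And>\<D>. \<D> division_of \<Union>\<D> \<Longrightarrow> \<Union>\<D> \<subseteq> {a..b} \<Longrightarrow> (\<And>K. K \<in> \<D> \<Longrightarrow> Inf K < Sup K) \<Longrightarrow>
       (\<Sum>K\<in>\<D>. measure lebesgue K) < \<delta> \<Longrightarrow> (\<Sum>K\<in>\<D>. \<bar>g (Sup K) - g (Inf K)\<bar>) < e"
proof -
  obtain \<delta> where "\<delta> > 0" and \<delta>: "\<And>(n::nat) s t. (\<forall>i<n. a \<le> s i \<and> s i \<le> t i \<and> t i \<le> b) \<Longrightarrow>
        (\<forall>i<n. \<forall>j<n. i \<noteq> j \<longrightarrow> t i \<le> s j \<or> t j \<le> s i) \<Longrightarrow>
        (\<Sum>i<n. t i - s i) < \<delta> \<Longrightarrow> (\<Sum>i<n. \<bar>g (t i) - g (s i)\<bar>) < e"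
    by (fact abs_cont_onD[OF assms])
  show thesis
  proof (rule that[OF \<open>\<delta> > 0\<close>])
    fix \<D> :: "real set set"
    assume div: "\<D> division_of \<Union>\<D>" and sub: "\<Union>\<D> \<subseteq> {a..b}"
      and nondeg: "\<And>K. K \<in> \<D> \<Longrightarrow> Inf K < Sup K" and small: "(\<Sum>K\<in>\<D>. measure lebesgue K) < \<delta>"
    obtain h where h: "bij_betw h {..<card \<D>} \<D>"
      using ex_bij_betw_nat_finite[OF division_ofD(1)[OF div]] atLeast0LessThan by metis
    define s where "s i = Inf (h i)" for i
    define t where "t i = Sup (h i)" for i
    have hi: "h i = {s i..t i}" "s i < t i" "h i \<in> \<D>" if "i < card \<D>" for i
    proof -
      have "h i \<in> \<D>" using bij_betwE[OF h] that by blast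
      moreover then obtain u v where "h i = {u..v}" "u \<le> v" by (rule division_of_real_intervalE[OF div])
      moreover have "Inf (h i) < Sup (h i)" using nondeg \<open>h i \<in> \<D>\<close> by blast
      ultimately show "h i = {s i..t i}" "s i < t i" "h i \<in> \<D>" by (auto simp: s_def t_def)
    qed
    have reindex: "(\<Sum>K\<in>\<D>. F K) = (\<Sum>i<card \<D>. F (h i))" for F :: "real set \<Rightarrow> real"
      using sum.reindex_bij_betw[OF h, of F] by simp
    have "(\<Sum>i<card \<D>. \<bar>g (t i) - g (s i)\<bar>) < e"
    proof (rule \<delta>)
      show "\<forall>i<card \<D>. a \<le> s i \<and> s i \<le> t i \<and> t i \<le> b"
      proof (intro allI impI)
        fix i assume i: "i < card \<D>"
        then have "{s i..t i} \<subseteq> {a..b}" using hi sub by blast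
        then show "a \<le> s i \<and> s i \<le> t i \<and> t i \<le> b" using hi(2)[OF i] by auto
      qed
      show "\<forall>i<card \<D>. \<forall>j<card \<D>. i \<noteq> j \<longrightarrow> t i \<le> s j \<or> t j \<le> s i"
      proof (intro allI impI)
        fix i j assume ij: "i < card \<D>" "j < card \<D>" "i \<noteq> j"
        then have "h i \<noteq> h j" using bij_betw_imp_inj_on[OF h] by (auto dest: inj_onD)
        then have "interior (h i) \<inter> interior (h j) = {}"
          using division_ofD(5)[OF div] hi ij by blast
        then show "t i \<le> s j \<or> t j \<le> s i"
          using disjoint_open_intervals_ordered[of "s i" "t i" "s j" "t j"] hi ij by simp
      qed
      have "(\<Sum>i<card \<D>. t i - s i) = (\<Sum>K\<in>\<D>. measure lebesgue K)"
        unfolding reindex using hi by (intro sum.cong) (auto simp: less_imp_le)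
      then show "(\<Sum>i<card \<D>. t i - s i) < \<delta>" using small by simp
    qed
    then show "(\<Sum>K\<in>\<D>. \<bar>g (Sup K) - g (Inf K)\<bar>) < e" by (simp add: reindex s_def t_def)
  qed
qed

lemma abs_cont_on_division:
  assumes "abs_cont_on a b g" "e > 0"
  obtains \<delta> where "\<delta> > 0"
    "\<And>\<D>. \<D> division_of \<Union>\<D> \<Longrightarrow> \<Union>\<D> \<subseteq> {a..b} \<Longrightarrow> (\<Sum>K\<in>\<D>. measure lebesgue K) < \<delta> \<Longrightarrow>
       (\<Sum>K\<in>\<D>. \<bar>g (Sup K) - g (Inf K)\<bar>) < e"
proof -
  obtain \<delta> where "\<delta> > 0" and \<delta>: "\<And>\<D>. \<D> division_of \<Union>\<D> \<Longrightarrow> \<Union>\<D> \<subseteq> {a..b} \<Longrightarrow>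
      (\<And>K. K \<in> \<D> \<Longrightarrow> Inf K < Sup K) \<Longrightarrow>
      (\<Sum>K\<in>\<D>. measure lebesgue K) < \<delta> \<Longrightarrow> (\<Sum>K\<in>\<D>. \<bar>g (Sup K) - g (Inf K)\<bar>) < e"
    by (fact abs_cont_on_nondegenerate_division[OF assms])
  show thesis
  proof (rule that[OF \<open>\<delta> > 0\<close>])
    fix \<D> :: "real set set"
    assume div: "\<D> division_of \<Union>\<D>" and sub: "\<Union>\<D> \<subseteq> {a..b}"
      and small: "(\<Sum>K\<in>\<D>. measure lebesgue K) < \<delta>"
    define \<D>' where "\<D>' = {K\<in>\<D>. Inf K < Sup K}"
    have "\<D>' \<subseteq> \<D>" by (auto simp: \<D>'_def)
    have degenerate: "Inf K = Sup K" "measure lebesgue K = 0" if K: "K \<in> \<D> - \<D>'" for K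
    proof -
      obtain u v where uv: "K = {u..v}" "u \<le> v" using K division_of_real_intervalE[OF div] by blast
      then have "u = v" using K by (auto simp: \<D>'_def)
      moreover have "measure lebesgue K = v - u" using uv by simp
      ultimately show "Inf K = Sup K" "measure lebesgue K = 0" using uv by auto
    qed
    have restrict: "(\<Sum>K\<in>\<D>. F K) = (\<Sum>K\<in>\<D>'. F K)"
      if "\<And>K. K \<in> \<D> - \<D>' \<Longrightarrow> F K = 0" for F :: "real set \<Rightarrow> real"
      using that div \<open>\<D>' \<subseteq> \<D>\<close> by (intro sum.mono_neutral_right) auto
    have "(\<Sum>K\<in>\<D>'. \<bar>g (Sup K) - g (Inf K)\<bar>) < e"
    proof (rule \<delta>)
      show "\<D>' division_of \<Union>\<D>'" using division_of_subset[OF div \<open>\<D>' \<subseteq> \<D>\<close>] .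
      show "\<Union>\<D>' \<subseteq> {a..b}" using sub \<open>\<D>' \<subseteq> \<D>\<close> by blast
      show "(\<Sum>K\<in>\<D>'. measure lebesgue K) < \<delta>" using small restrict[of "measure lebesgue"] degenerate by simp
    qed (simp add: \<D>'_def)
    then show "(\<Sum>K\<in>\<D>. \<bar>g (Sup K) - g (Inf K)\<bar>) < e" using restrict degenerate by simp
  qed
qed

text \<open>Guarded because \<open>Sup {}\<close> and \<open>Inf {}\<close> are unspecified reals.\<close>
definition increment :: "(real \<Rightarrow> real) \<Rightarrow> real set \<Rightarrow> real" where
  "increment g K = (if K = {} then 0 else g (Sup K) - g (Inf K))"

lemma abs_cont_on_tagged_partial_division:
  assumes "abs_cont_on a b g" "e > 0"
  obtains \<delta> where "\<delta> > 0"
    "\<And>p U. p tagged_partial_division_of {a..b} \<Longrightarrow> (\<And>x K. (x, K) \<in> p \<Longrightarrow> K \<subseteq> U) \<Longrightarrow>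
       U \<in> lmeasurable \<Longrightarrow> measure lebesgue U < \<delta> \<Longrightarrow> (\<Sum>(x, K)\<in>p. increment g K) < e"
proof -
  obtain \<delta> where "\<delta> > 0" and \<delta>: "\<And>\<D>. \<D> division_of \<Union>\<D> \<Longrightarrow> \<Union>\<D> \<subseteq> {a..b} \<Longrightarrow>
       (\<Sum>K\<in>\<D>. measure lebesgue K) < \<delta> \<Longrightarrow> (\<Sum>K\<in>\<D>. \<bar>g (Sup K) - g (Inf K)\<bar>) < e"
    by (fact abs_cont_on_division[OF assms])
  show thesis
  proof (rule that[OF \<open>\<delta> > 0\<close>])
    fix p U
    assume partial: "p tagged_partial_division_of {a..b}" and in_U: "\<And>x K. (x, K) \<in> p \<Longrightarrow> K \<subseteq> U"
      and U: "U \<in> lmeasurable" "measure lebesgue U < \<delta>"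
    have div: "snd ` p division_of \<Union>(snd ` p)"
      by (rule partial_division_of_tagged_division[OF partial])
    have "\<Union>(snd ` p) \<subseteq> U" using in_U by force
    then have "measure lebesgue (\<Union>(snd ` p)) \<le> measure lebesgue U"
      using lmeasurable_division[OF div] U by (intro measure_mono_fmeasurable) auto
    then have "(\<Sum>K\<in>snd ` p. measure lebesgue K) < \<delta>"
      using content_division[OF div] U by simp
    moreover have "\<Union>(snd ` p) \<subseteq> {a..b}" using tagged_partial_division_ofD(3)[OF partial] by force
    ultimately have "(\<Sum>K\<in>snd ` p. \<bar>g (Sup K) - g (Inf K)\<bar>) < e"
      by (intro \<delta>[OF div]) simp_all
    moreover have "(\<Sum>K\<in>snd ` p. \<bar>g (Sup K) - g (Inf K)\<bar>) = (\<Sum>K\<in>snd ` p. \<bar>increment g K\<bar>)"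
      using division_ofD(3)[OF div] by (intro sum.cong) (auto simp: increment_def)
    moreover have "(\<Sum>(x, K)\<in>p. \<bar>increment g K\<bar>) = (\<Sum>K\<in>snd ` p. \<bar>increment g K\<bar>)"
    proof (rule sum.over_tagged_division_lemma[OF tagged_partial_division_of_Union_self[OF partial]])
      fix u v :: real assume "box u v = {}"
      then have "v \<le> u" by simp
      then show "\<bar>increment g (cbox u v)\<bar> = 0" by (cases "v < u") (simp_all add: increment_def)
    qed
    moreover have "(\<Sum>(x, K)\<in>p. increment g K) \<le> (\<Sum>(x, K)\<in>p. \<bar>increment g K\<bar>)"
      by (intro sum_mono) auto
    ultimately show "(\<Sum>(x, K)\<in>p. increment g K) < e" by linarith
  qed
qed

lemma abs_cont_on_imp_continuous_on:
  assumes "abs_cont_on a b g"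
  shows "continuous_on {a..b} g"
  unfolding continuous_on_iff
proof (intro ballI allI impI)
  fix x e :: real assume x: "x \<in> {a..b}" and "e > 0"
  obtain \<delta> where "\<delta> > 0" and \<delta>: "\<And>(n::nat) s t. (\<forall>i<n. a \<le> s i \<and> s i \<le> t i \<and> t i \<le> b) \<Longrightarrow>
        (\<forall>i<n. \<forall>j<n. i \<noteq> j \<longrightarrow> t i \<le> s j \<or> t j \<le> s i) \<Longrightarrow>
        (\<Sum>i<n. t i - s i) < \<delta> \<Longrightarrow> (\<Sum>i<n. \<bar>g (t i) - g (s i)\<bar>) < e"
    by (fact abs_cont_onD[OF assms \<open>e > 0\<close>])
  have "dist (g y) (g x) < e" if y: "y \<in> {a..b}" "dist y x < \<delta>" for y
    using \<delta>[of 1 "\<lambda>_. min x y" "\<lambda>_. max x y"] x y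
    by (cases "x \<le> y") (auto simp: dist_real_def abs_minus_commute)
  then show "\<exists>d>0. \<forall>y\<in>{a..b}. dist y x < d \<longrightarrow> dist (g y) (g x) < e"
    using \<open>\<delta> > 0\<close> by blast
qed

lemma abs_cont_on_id: "abs_cont_on a b (\<lambda>x. x)"
  unfolding abs_cont_on_def
proof (intro allI impI exI conjI)
  fix e :: real assume "e > 0"
  then show "e > 0" .
  fix n :: nat and s t
  assume "(\<forall>i<n. a \<le> s i \<and> s i \<le> t i \<and> t i \<le> b) \<and>
      (\<forall>i<n. \<forall>j<n. i \<noteq> j \<longrightarrow> t i \<le> s j \<or> t j \<le> s i) \<and> (\<Sum>i<n. t i - s i) < e"
  moreover from this have "(\<Sum>i<n. \<bar>t i - s i\<bar>) = (\<Sum>i<n. t i - s i)" by (intro sum.cong) auto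
  ultimately show "(\<Sum>i<n. \<bar>t i - s i\<bar>) < e" by simp
qed

lemma abs_cont_on_dominated:
  assumes g1: "abs_cont_on a b g1" and g2: "abs_cont_on a b g2" and "M \<ge> 0"
    and dom: "\<And>x y. x \<in> {a..b} \<Longrightarrow> y \<in> {a..b} \<Longrightarrow>
      \<bar>h y - h x\<bar> \<le> M * (\<bar>g1 y - g1 x\<bar> + \<bar>g2 y - g2 x\<bar>)"
  shows "abs_cont_on a b h"
  unfolding abs_cont_on_def
proof (intro allI impI)
  fix e :: real assume "e > 0"
  define e' where "e' = e / (2 * (M + 1))"
  have "e' > 0" using \<open>e > 0\<close> \<open>M \<ge> 0\<close> by (simp add: e'_def)
  obtain d1 where "d1 > 0" and d1: "\<And>(n::nat) s t. (\<forall>i<n. a \<le> s i \<and> s i \<le> t i \<and> t i \<le> b) \<Longrightarrow>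
        (\<forall>i<n. \<forall>j<n. i \<noteq> j \<longrightarrow> t i \<le> s j \<or> t j \<le> s i) \<Longrightarrow>
        (\<Sum>i<n. t i - s i) < d1 \<Longrightarrow> (\<Sum>i<n. \<bar>g1 (t i) - g1 (s i)\<bar>) < e'"
    by (fact abs_cont_onD[OF g1 \<open>e' > 0\<close>])
  obtain d2 where "d2 > 0" and d2: "\<And>(n::nat) s t. (\<forall>i<n. a \<le> s i \<and> s i \<le> t i \<and> t i \<le> b) \<Longrightarrow>
        (\<forall>i<n. \<forall>j<n. i \<noteq> j \<longrightarrow> t i \<le> s j \<or> t j \<le> s i) \<Longrightarrow>
        (\<Sum>i<n. t i - s i) < d2 \<Longrightarrow> (\<Sum>i<n. \<bar>g2 (t i) - g2 (s i)\<bar>) < e'"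
    by (fact abs_cont_onD[OF g2 \<open>e' > 0\<close>])
  show "\<exists>\<delta>>0. \<forall>(n::nat) s t. (\<forall>i<n. a \<le> s i \<and> s i \<le> t i \<and> t i \<le> b) \<and>
        (\<forall>i<n. \<forall>j<n. i \<noteq> j \<longrightarrow> t i \<le> s j \<or> t j \<le> s i) \<and>
        (\<Sum>i<n. t i - s i) < \<delta> \<longrightarrow> (\<Sum>i<n. \<bar>h (t i) - h (s i)\<bar>) < e"
  proof (intro exI[of _ "min d1 d2"] conjI allI impI)
    show "min d1 d2 > 0" using \<open>d1 > 0\<close> \<open>d2 > 0\<close> by simp
    fix n :: nat and s t
    assume "(\<forall>i<n. a \<le> s i \<and> s i \<le> t i \<and> t i \<le> b) \<and>
        (\<forall>i<n. \<forall>j<n. i \<noteq> j \<longrightarrow> t i \<le> s j \<or> t j \<le> s i) \<and>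
        (\<Sum>i<n. t i - s i) < min d1 d2"
    then have inside: "\<forall>i<n. a \<le> s i \<and> s i \<le> t i \<and> t i \<le> b"
      and disjoint: "\<forall>i<n. \<forall>j<n. i \<noteq> j \<longrightarrow> t i \<le> s j \<or> t j \<le> s i"
      and small: "(\<Sum>i<n. t i - s i) < min d1 d2" by blast+
    have "(\<Sum>i<n. \<bar>h (t i) - h (s i)\<bar>)
        \<le> (\<Sum>i<n. M * (\<bar>g1 (t i) - g1 (s i)\<bar> + \<bar>g2 (t i) - g2 (s i)\<bar>))"
      using inside by (intro sum_mono dom) auto
    also have "\<dots> = M * ((\<Sum>i<n. \<bar>g1 (t i) - g1 (s i)\<bar>) + (\<Sum>i<n. \<bar>g2 (t i) - g2 (s i)\<bar>))"
      by (simp only: sum_distrib_left[symmetric] sum.distrib[symmetric])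
    also have "\<dots> \<le> M * (e' + e')"
      using d1[OF inside disjoint] d2[OF inside disjoint] small \<open>M \<ge> 0\<close>
      by (intro mult_left_mono) auto
    also have "\<dots> = e * M / (M + 1)"
      using \<open>M \<ge> 0\<close> by (simp add: e'_def divide_simps)
    also have "\<dots> < e" using \<open>e > 0\<close> \<open>M \<ge> 0\<close> by (simp add: field_simps)
    finally show "(\<Sum>i<n. \<bar>h (t i) - h (s i)\<bar>) < e" .
  qed
qed

lemma abs_cont_on_lipschitz:
  assumes "C \<ge> 0" and lip: "\<And>x y. \<bar>g x - g y\<bar> \<le> C * \<bar>x - y\<bar>"
  shows "abs_cont_on a b g"
proof (rule abs_cont_on_dominated[of a b "\<lambda>x. x" "\<lambda>x. x" C g])
  fix x y :: real
  have "C * \<bar>y - x\<bar> \<le> C * (\<bar>y - x\<bar> + \<bar>y - x\<bar>)" using \<open>C \<ge> 0\<close> by (intro mult_left_mono) auto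
  then show "\<bar>g y - g x\<bar> \<le> C * (\<bar>y - x\<bar> + \<bar>y - x\<bar>)" using lip[of y x] by linarith
qed (use \<open>C \<ge> 0\<close> abs_cont_on_id in auto)

lemma abs_cont_on_square_diff:
  assumes z1: "abs_cont_on a b z1" and z2: "abs_cont_on a b z2"
  shows "abs_cont_on a b (\<lambda>x. (z1 x - z2 x)^2)"
proof -
  have "compact ((\<lambda>x. z1 x - z2 x) ` {a..b})"
    using abs_cont_on_imp_continuous_on[OF z1] abs_cont_on_imp_continuous_on[OF z2]
    by (intro compact_continuous_image continuous_on_diff) auto
  then obtain C where "\<forall>y\<in>(\<lambda>x. z1 x - z2 x) ` {a..b}. norm y \<le> C"
    using compact_imp_bounded bounded_iff by metis
  then have C: "\<And>x. x \<in> {a..b} \<Longrightarrow> \<bar>z1 x - z2 x\<bar> \<le> C" by auto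
  show ?thesis
  proof (rule abs_cont_on_dominated[OF z1 z2, where h = "\<lambda>x. (z1 x - z2 x)^2"])
    show "0 \<le> 2 * \<bar>C\<bar>" by simp
    fix x y assume "x \<in> {a..b}" "y \<in> {a..b}"
    then have bound: "\<bar>(z1 y - z2 y) + (z1 x - z2 x)\<bar> \<le> 2 * \<bar>C\<bar>" using C[of x] C[of y] by linarith
    have "(z1 y - z2 y)^2 - (z1 x - z2 x)^2
        = ((z1 y - z2 y) + (z1 x - z2 x)) * ((z1 y - z1 x) - (z2 y - z2 x))"
      by (simp add: power2_eq_square algebra_simps)
    then have "\<bar>(z1 y - z2 y)^2 - (z1 x - z2 x)^2\<bar>
        = \<bar>(z1 y - z2 y) + (z1 x - z2 x)\<bar> * \<bar>(z1 y - z1 x) - (z2 y - z2 x)\<bar>"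
      by (simp add: abs_mult)
    also have "\<dots> \<le> 2 * \<bar>C\<bar> * \<bar>(z1 y - z1 x) - (z2 y - z2 x)\<bar>"
      using bound by (rule mult_right_mono) simp
    also have "\<dots> \<le> 2 * \<bar>C\<bar> * (\<bar>z1 y - z1 x\<bar> + \<bar>z2 y - z2 x\<bar>)"
      by (intro mult_left_mono abs_triangle_ineq4) simp
    finally show "\<bar>(z1 y - z2 y)^2 - (z1 x - z2 x)^2\<bar>
        \<le> 2 * \<bar>C\<bar> * (\<bar>z1 y - z1 x\<bar> + \<bar>z2 y - z2 x\<bar>)" .
  qed
qed

lemma negligible_open_cover:
  fixes S :: "real set"
  assumes "negligible S" "e > 0"
  obtains U where "open U" "S \<subseteq> U" "U \<in> lmeasurable" "measure lebesgue U < e"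
proof -
  have "S \<in> sets lebesgue" using assms by (simp add: negligible_iff_null_sets null_setsD2)
  then obtain U where U: "open U" "S \<subseteq> U" "(U - S) \<in> lmeasurable" "measure lebesgue (U - S) < e"
    using sets_lebesgue_outer_open [OF _ \<open>e>0\<close>]
    by (metis emeasure_eq_measure2 ennreal_leI linorder_not_le)
  have "U = (U - S) \<union> S" using U by auto
  moreover have "S \<in> lmeasurable" using assms by (simp add: negligible_imp_measurable)
  ultimately have "U \<in> lmeasurable" using U by (metis fmeasurable.Un)
  moreover have "measure lebesgue U < e"
    using U assms by (simp add: measure_Diff_null_set negligible_iff_null_sets)
  ultimately show ?thesis using U that by blast
qed

lemma has_real_derivative_nonpos_straddle:
  fixes g :: "real \<Rightarrow> real"
  assumes "(g has_real_derivative D) (at x)" "D \<le> 0" "e > 0"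
  obtains r where "r > 0"
    "\<And>u v. u \<le> x \<Longrightarrow> x \<le> v \<Longrightarrow> u \<in> ball x r \<Longrightarrow> v \<in> ball x r \<Longrightarrow> g v - g u \<le> e * (v - u)"
proof -
  have "(g has_derivative (*) D) (at x)" using assms(1) by (simp add: has_field_derivative_def)
  then obtain r where r: "r > 0"
    "\<And>y. norm (y - x) < r \<Longrightarrow> norm (g y - g x - D * (y - x)) \<le> e * norm (y - x)"
    using assms(3) unfolding has_derivative_at_alt by blast
  show ?thesis
  proof (rule that[OF r(1)])
    fix u v assume uv: "u \<le> x" "x \<le> v" "u \<in> ball x r" "v \<in> ball x r"
    have "\<bar>g v - g x - D * (v - x)\<bar> \<le> e * \<bar>v - x\<bar>" "\<bar>g u - g x - D * (u - x)\<bar> \<le> e * \<bar>u - x\<bar>"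
      using r(2)[of v] r(2)[of u] uv by (simp_all add: dist_norm dist_commute)
    moreover have "D * (v - x) \<le> 0" "D * (x - u) \<le> 0"
      using uv assms(2) by (auto simp: mult_nonpos_nonneg)
    ultimately show "g v - g u \<le> e * (v - u)"
      using uv by (auto simp: abs_if algebra_simps split: if_splits)
  qed
qed

lemma deriv_nonpos_gauge:
  assumes "open U" "N \<subseteq> U" "e > 0"
    and der: "\<And>x. x \<in> {a..b} \<Longrightarrow> x \<notin> N \<Longrightarrow> \<exists>D\<le>0. (g has_real_derivative D) (at x)"
  obtains \<rho> where "\<And>x. \<rho> x > 0" "\<And>x. x \<in> N \<Longrightarrow> ball x (\<rho> x) \<subseteq> U"
    "\<And>x u v. x \<in> {a..b} - N \<Longrightarrow> u \<le> x \<Longrightarrow> x \<le> v \<Longrightarrow> u \<in> ball x (\<rho> x) \<Longrightarrow>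
      v \<in> ball x (\<rho> x) \<Longrightarrow> g v - g u \<le> e * (v - u)"
proof -
  have "\<exists>r>0. (x \<in> N \<longrightarrow> ball x r \<subseteq> U) \<and> (x \<in> {a..b} - N \<longrightarrow>
      (\<forall>u v. u \<le> x \<longrightarrow> x \<le> v \<longrightarrow> u \<in> ball x r \<longrightarrow> v \<in> ball x r \<longrightarrow> g v - g u \<le> e * (v - u)))" for x
  proof (cases "x \<in> N")
    case True
    then obtain r where "r > 0" "ball x r \<subseteq> U" using assms(1,2) by (meson open_contains_ball subsetD)
    then show ?thesis using True by blast
  next
    case False
    show ?thesis
    proof (cases "x \<in> {a..b}")
      case True
      then obtain D where "D \<le> 0" "(g has_real_derivative D) (at x)" using der False by blast
      then obtain r where "r > 0" "\<And>u v. u \<le> x \<Longrightarrow> x \<le> v \<Longrightarrow> u \<in> ball x r \<Longrightarrow> v \<in> ball x r \<Longrightarrow>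
          g v - g u \<le> e * (v - u)"
        using has_real_derivative_nonpos_straddle \<open>e > 0\<close> by metis
      then show ?thesis using False by blast
    qed (use False in \<open>intro exI[of _ "1::real"], auto\<close>)
  qed
  then have "\<exists>\<rho>. \<forall>x. \<rho> x > 0 \<and> (x \<in> N \<longrightarrow> ball x (\<rho> x) \<subseteq> U) \<and> (x \<in> {a..b} - N \<longrightarrow>
      (\<forall>u v. u \<le> x \<longrightarrow> x \<le> v \<longrightarrow> u \<in> ball x (\<rho> x) \<longrightarrow> v \<in> ball x (\<rho> x) \<longrightarrow>
        g v - g u \<le> e * (v - u)))"
    by (rule choice[OF allI])
  then show thesis using that by blast
qed

lemma tagged_division_fine_intervalE:
  fixes a b :: real
  assumes "p tagged_division_of {a..b}" "\<gamma> fine p" "(x, K) \<in> p"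
  obtains u v where "K = {u..v}" "u \<le> x" "x \<le> v" "x \<in> {a..b}" "K \<subseteq> \<gamma> x"
proof -
  obtain u v where "K = cbox u v" using assms(1,3) by (meson tagged_division_ofD(4))
  moreover have "x \<in> K" "K \<subseteq> {a..b}" using assms(1,3) by (meson tagged_division_ofD)+
  moreover have "K \<subseteq> \<gamma> x" using assms(2,3) by (force simp: fine_def)
  ultimately show thesis by (intro that[of u v]) (auto simp: box_real)
qed

lemma tagged_division_sum_le_content:
  fixes a b :: real
  assumes "p tagged_division_of {a..b}" "a \<le> b" "e \<ge> 0" "q \<subseteq> p"
    and "\<And>x K. (x, K) \<in> q \<Longrightarrow> F K \<le> e * measure lborel K"
  shows "(\<Sum>(x, K)\<in>q. F K) \<le> e * (b - a)"
proof -
  have "(\<Sum>(x, K)\<in>q. F K) \<le> (\<Sum>(x, K)\<in>q. e * measure lborel K)"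
    using assms(5) by (intro sum_mono) auto
  also have "\<dots> \<le> (\<Sum>(x, K)\<in>p. e * measure lborel K)"
    using tagged_division_of_finite[OF assms(1)] assms(3,4) by (intro sum_mono2) auto
  also have "\<dots> = e * (b - a)"
    using additive_content_tagged_division[OF assms(1)[unfolded box_real(2)[symmetric]]] assms(2)
    by (simp add: sum_distrib_left[symmetric] split_beta')
  finally show ?thesis .
qed

lemma abs_cont_on_deriv_nonpos_increment_le:
  assumes "a \<le> b" and ac: "abs_cont_on a b g" and "negligible N" and "e > 0"
    and der: "\<And>x. x \<in> {a..b} \<Longrightarrow> x \<notin> N \<Longrightarrow> \<exists>D\<le>0. (g has_real_derivative D) (at x)"
  shows "g b - g a \<le> e * (b - a) + e"
proof -
  obtain \<delta> where "\<delta> > 0" and \<delta>: "\<And>p U. p tagged_partial_division_of {a..b} \<Longrightarrow>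
      (\<And>x K. (x, K) \<in> p \<Longrightarrow> K \<subseteq> U) \<Longrightarrow> U \<in> lmeasurable \<Longrightarrow> measure lebesgue U < \<delta> \<Longrightarrow>
      (\<Sum>(x, K)\<in>p. increment g K) < e"
    by (fact abs_cont_on_tagged_partial_division[OF ac \<open>e > 0\<close>])
  obtain U where U: "open U" "N \<subseteq> U" "U \<in> lmeasurable" "measure lebesgue U < \<delta>"
    using negligible_open_cover[OF \<open>negligible N\<close> \<open>\<delta> > 0\<close>] by blast
  text \<open>Cousin's lemma with a gauge that keeps the tagged intervals with tags in \<open>N\<close> inside
    \<open>U\<close> and makes the increment of \<open>g\<close> at most \<open>e\<close> times the length on all others.\<close>
  obtain \<rho> where \<rho>_pos: "\<And>x. \<rho> x > 0" and \<rho>_N: "\<And>x. x \<in> N \<Longrightarrow> ball x (\<rho> x) \<subseteq> U"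
    and \<rho>_good: "\<And>x u v. x \<in> {a..b} - N \<Longrightarrow> u \<le> x \<Longrightarrow> x \<le> v \<Longrightarrow> u \<in> ball x (\<rho> x) \<Longrightarrow>
      v \<in> ball x (\<rho> x) \<Longrightarrow> g v - g u \<le> e * (v - u)"
    using deriv_nonpos_gauge[OF U(1,2) \<open>e > 0\<close> der] by blast
  obtain p where p: "p tagged_division_of {a..b}" "(\<lambda>x. ball x (\<rho> x)) fine p"
    using fine_division_exists_real gauge_ball_dependent \<rho>_pos by blast
  define pN where "pN = {(x, K) \<in> p. x \<in> N}"
  have "pN \<subseteq> p" by (auto simp: pN_def)
  have "g b - g a = (\<Sum>(x, K)\<in>p. g (Sup K) - g (Inf K))"
    using additive_tagged_division_1[OF \<open>a \<le> b\<close> p(1), of g] by simp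
  also have "\<dots> = (\<Sum>(x, K)\<in>p. increment g K)"
    by (intro sum.cong) (auto simp: increment_def dest: tagged_division_ofD(2)[OF p(1)])
  also have "\<dots> = (\<Sum>(x, K)\<in>pN. increment g K) + (\<Sum>(x, K)\<in>p - pN. increment g K)"
    using sum.subset_diff[OF \<open>pN \<subseteq> p\<close> tagged_division_of_finite[OF p(1)]] by (simp add: add.commute)
  finally have split: "g b - g a = (\<Sum>(x, K)\<in>pN. increment g K) + (\<Sum>(x, K)\<in>p - pN. increment g K)" .
  have good: "(\<Sum>(x, K)\<in>p - pN. increment g K) \<le> e * (b - a)"
  proof (rule tagged_division_sum_le_content[OF p(1) \<open>a \<le> b\<close>])
    fix x K assume "(x, K) \<in> p - pN"
    then have "(x, K) \<in> p" "x \<notin> N" by (auto simp: pN_def)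
    obtain u v where K: "K = {u..v}" "u \<le> x" "x \<le> v" "x \<in> {a..b}" "K \<subseteq> ball x (\<rho> x)"
      by (rule tagged_division_fine_intervalE[OF p \<open>(x, K) \<in> p\<close>])
    have "u \<in> K" "v \<in> K" using K(1-3) by auto
    then have "g v - g u \<le> e * (v - u)"
      using \<rho>_good[of x u v] K(2-5) \<open>x \<notin> N\<close> by blast
    then show "increment g K \<le> e * measure lborel K" using K(1-3) by (simp add: increment_def)
  qed (use \<open>e > 0\<close> in auto)
  have "p tagged_partial_division_of {a..b}"
    using p(1) unfolding tagged_division_of_def by (rule conjunct1)
  then have "pN tagged_partial_division_of {a..b}"
    using \<open>pN \<subseteq> p\<close> by (rule tagged_partial_division_subset)
  moreover have "K \<subseteq> U" if "(x, K) \<in> pN" for x K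
  proof -
    have "(x, K) \<in> p" "x \<in> N" using that by (auto simp: pN_def)
    from \<open>(x, K) \<in> p\<close> have "K \<subseteq> ball x (\<rho> x)" by (rule tagged_division_fine_intervalE[OF p])
    then show ?thesis using \<rho>_N[OF \<open>x \<in> N\<close>] by blast
  qed
  ultimately have bad: "(\<Sum>(x, K)\<in>pN. increment g K) < e"
    using \<delta> U(3,4) by blast
  show ?thesis using split good bad by linarith
qed

lemma abs_cont_on_deriv_nonpos_imp_le:
  assumes "a \<le> b" and "abs_cont_on a b g" and "negligible N"
    and "\<And>x. x \<in> {a..b} \<Longrightarrow> x \<notin> N \<Longrightarrow> \<exists>D\<le>0. (g has_real_derivative D) (at x)"
  shows "g b \<le> g a"
proof -
  have "g b - g a \<le> 0"
  proof (rule field_le_epsilon)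
    fix e :: real assume "e > 0"
    define e' where "e' = e / (b - a + 1)"
    have "e' > 0" using \<open>e > 0\<close> \<open>a \<le> b\<close> by (simp add: e'_def)
    have "g b - g a \<le> e' * (b - a) + e'"
      by (rule abs_cont_on_deriv_nonpos_increment_le[OF assms(1-3) \<open>e' > 0\<close> assms(4)])
    also have "\<dots> = e' * (b - a + 1)" by (simp add: algebra_simps)
    also have "\<dots> = e" using \<open>a \<le> b\<close> by (simp add: e'_def)
    finally show "g b - g a \<le> 0 + e" by simp
  qed
  then show ?thesis by simp
qed

section \<open>Queue dynamics\<close>

definition queue_law :: "real \<Rightarrow> real \<Rightarrow> (real \<Rightarrow> real) \<Rightarrow> real \<Rightarrow> bool" where
  "queue_law c r z \<theta> \<longleftrightarrow>
     (z \<theta> > 0 \<longrightarrow> (z has_real_derivative (r - c)) (at \<theta>)) \<and>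
     (z \<theta> = 0 \<longrightarrow> (z has_real_derivative (max (r - c) 0)) (at \<theta>))"

lemma is_queue_iff:
  "is_queue c g z \<longleftrightarrow> z 0 = 0 \<and> (\<forall>\<theta>\<ge>0. z \<theta> \<ge> 0) \<and> (\<forall>b\<ge>0. abs_cont_on 0 b z) \<and>
     (AE \<theta> in lborel. 0 < \<theta> \<longrightarrow> queue_law c (g \<theta>) z \<theta>)"
  by (simp add: is_queue_def queue_law_def)

lemma queue_law_locally_affine:
  assumes "open S" "\<theta> \<in> S" and affine: "\<And>y. y \<in> S \<Longrightarrow> z y = z \<theta> + d * (y - \<theta>)"
    and "z \<theta> > 0 \<Longrightarrow> d = r - c" and "z \<theta> = 0 \<Longrightarrow> d = max (r - c) 0"
  shows "queue_law c r z \<theta>"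
proof -
  have "((\<lambda>y. z \<theta> + d * (y - \<theta>)) has_real_derivative d) (at \<theta>)"
    by (auto intro!: derivative_eq_intros)
  then have "(z has_real_derivative d) (at \<theta>)"
    by (rule has_field_derivative_transform_within_open[OF _ assms(1,2)]) (metis affine)
  then show ?thesis using assms(4,5) by (auto simp: queue_law_def)
qed

lemma queue_law_square_diff_deriv_nonpos:
  assumes law1: "queue_law c r z1 \<theta>" and law2: "queue_law c r z2 \<theta>"
    and "z1 \<theta> \<ge> 0" "z2 \<theta> \<ge> 0"
  shows "\<exists>D\<le>0. ((\<lambda>x. (z1 x - z2 x)^2) has_real_derivative D) (at \<theta>)"
proof -
  define rate where "rate z = (if z \<theta> > 0 then r - c else max (r - c) 0)" for z :: "real \<Rightarrow> real"
  have D1: "(z1 has_real_derivative rate z1) (at \<theta>)" and D2: "(z2 has_real_derivative rate z2) (at \<theta>)"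
    using law1 law2 assms(3,4) by (auto simp: queue_law_def rate_def)
  have deriv: "((\<lambda>x. (z1 x - z2 x)^2) has_real_derivative 2 * (z1 \<theta> - z2 \<theta>) * (rate z1 - rate z2)) (at \<theta>)"
    using DERIV_mult[OF DERIV_diff[OF D1 D2] DERIV_diff[OF D1 D2]]
    by (simp add: power2_eq_square algebra_simps)
  text \<open>The longer of two queues fed by the same inflow never grows faster than the shorter.\<close>
  have "(z1 \<theta> - z2 \<theta>) * (rate z1 - rate z2) \<le> 0"
  proof (cases "z1 \<theta> > 0"; cases "z2 \<theta> > 0")
    assume "z1 \<theta> > 0" "\<not> z2 \<theta> > 0"
    then have "z1 \<theta> - z2 \<theta> \<ge> 0" "rate z1 - rate z2 \<le> 0" by (auto simp: rate_def)
    then show ?thesis by (rule mult_nonneg_nonpos)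
  next
    assume "\<not> z1 \<theta> > 0" "z2 \<theta> > 0"
    then have "z1 \<theta> - z2 \<theta> \<le> 0" "rate z1 - rate z2 \<ge> 0" using assms(3) by (auto simp: rate_def)
    then show ?thesis by (rule mult_nonpos_nonneg)
  qed (use assms(3,4) in \<open>simp_all add: rate_def\<close>)
  then have "2 * ((z1 \<theta> - z2 \<theta>) * (rate z1 - rate z2)) \<le> 0"
    by (rule mult_nonneg_nonpos[rotated]) simp
  then have "2 * (z1 \<theta> - z2 \<theta>) * (rate z1 - rate z2) \<le> 0"
    by (simp only: mult.assoc)
  with deriv show ?thesis by (intro exI conjI)
qed

lemma is_queue_unique:
  assumes q1: "is_queue c g z1" and q2: "is_queue c g z2" and "0 \<le> t"
  shows "z1 t = z2 t"
proof -
  have "AE \<theta> in lborel. 0 < \<theta> \<longrightarrow> queue_law c (g \<theta>) z1 \<theta>"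
    "AE \<theta> in lborel. 0 < \<theta> \<longrightarrow> queue_law c (g \<theta>) z2 \<theta>"
    using q1 q2 unfolding is_queue_iff by simp_all
  then have "AE \<theta> in lborel. 0 < \<theta> \<longrightarrow> queue_law c (g \<theta>) z1 \<theta> \<and> queue_law c (g \<theta>) z2 \<theta>"
    by eventually_elim blast
  then obtain N where N: "\<And>\<theta>. \<theta> \<in> space lborel - N \<Longrightarrow>
      0 < \<theta> \<longrightarrow> queue_law c (g \<theta>) z1 \<theta> \<and> queue_law c (g \<theta>) z2 \<theta>" "N \<in> null_sets lborel"
    by (rule AE_E3) blast
  have "abs_cont_on 0 t (\<lambda>x. (z1 x - z2 x)^2)"
    using q1 q2 \<open>0 \<le> t\<close> by (intro abs_cont_on_square_diff) (auto simp: is_queue_def)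
  moreover have "negligible (insert 0 N)"
    using N(2) by (simp add: negligible_iff_null_sets null_sets_completionI)
  ultimately have "(z1 t - z2 t)^2 \<le> (z1 0 - z2 0)^2"
  proof (rule abs_cont_on_deriv_nonpos_imp_le[OF \<open>0 \<le> t\<close>])
    fix x assume "x \<in> {0..t}" "x \<notin> insert 0 N"
    then have "queue_law c (g x) z1 x" "queue_law c (g x) z2 x" "z1 x \<ge> 0" "z2 x \<ge> 0"
      using N(1)[of x] q1 q2 by (auto simp: is_queue_def)
    then show "\<exists>D\<le>0. ((\<lambda>x. (z1 x - z2 x)^2) has_real_derivative D) (at x)"
      by (rule queue_law_square_diff_deriv_nonpos)
  qed
  then show ?thesis using q1 q2 by (simp add: is_queue_def)
qed

section \<open>The canonical flow\<close>

text \<open>The breakpoints \<open>\<theta>\<^sup>*\<^sub>i\<close> without the case distinction that makes them infinite.\<close>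
fun breakpoint :: "(nat \<Rightarrow> real) \<Rightarrow> (nat \<Rightarrow> real) \<Rightarrow> real \<Rightarrow> nat \<Rightarrow> real" where
  "breakpoint nu tau u 0 = 0"
| "breakpoint nu tau u (Suc 0) = 0"
| "breakpoint nu tau u (Suc (Suc i)) = breakpoint nu tau u (Suc i)
      + nubar nu (Suc i) / (u - nubar nu (Suc i)) * (tau (Suc (Suc i)) - tau (Suc i))"

lemma nubar_0[simp]: "nubar nu 0 = 0" by (simp add: nubar_def)
lemma nubar_Suc: "nubar nu (Suc j) = nubar nu j + nu (Suc j)"
  by (simp add: nubar_def)

locale parallel_links =
  fixes m :: nat and nu tau :: "nat \<Rightarrow> real" and u :: real
  assumes m_ge_1: "m \<ge> 1"
    and nu_pos: "\<And>i. i \<in> {1..m} \<Longrightarrow> nu i > 0"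
    and u_pos: "u > 0"
    and tau_mono: "\<And>i j. 1 \<le> i \<Longrightarrow> i \<le> j \<Longrightarrow> j \<le> m \<Longrightarrow> tau i \<le> tau j"
begin

abbreviation k :: nat where "k \<equiv> kidx m nu u"
abbreviation ts :: "nat \<Rightarrow> ereal" where "ts \<equiv> theta_star m nu tau u"
abbreviation brk :: "nat \<Rightarrow> real" where "brk \<equiv> breakpoint nu tau u"
abbreviation flow :: "nat \<Rightarrow> real \<Rightarrow> real" where "flow \<equiv> canonical_flow m nu tau u"

definition last_link :: nat where "last_link = (if k < m then Suc k else k)"

definition slope :: "nat \<Rightarrow> real" where "slope l = (if l \<le> k then u / nubar nu l - 1 else 0)"

definition travel_line :: "nat \<Rightarrow> real \<Rightarrow> real" where
  "travel_line l \<theta> = tau l + slope l * (\<theta> - brk l)"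

text \<open>During the \<open>j\<close>-th phase all links in use have the same travel time \<open>travel_line j \<theta>\<close>;
  these lines form a concave chain, so the travel time is their lower envelope.\<close>
definition delay :: "real \<Rightarrow> real" where
  "delay \<theta> = Min ((\<lambda>l. travel_line l \<theta>) ` {1..last_link})"

definition queue :: "nat \<Rightarrow> real \<Rightarrow> real" where
  "queue i \<theta> = nu i * max 0 (delay \<theta> - tau i)"

lemma nubar_mono: "j \<le> j' \<Longrightarrow> j' \<le> m \<Longrightarrow> nubar nu j \<le> nubar nu j'"
proof (induction j' rule: dec_induct)
  case base then show ?case by simp
next
  case (step n) then show ?case using nu_pos[of "Suc n"] by (simp add: nubar_Suc)
qed

lemma nubar_strict_mono:
  assumes "j < j'" "j' \<le> m"
  shows "nubar nu j < nubar nu j'"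
proof -
  from assms obtain q where q: "j' = Suc q" "j \<le> q" by (metis less_imp_Suc_add le_add1)
  have "nubar nu j \<le> nubar nu q" using nubar_mono q assms by simp
  then show ?thesis using nu_pos[of j'] q assms by (simp add: nubar_Suc)
qed

lemma nubar_pos: "1 \<le> j \<Longrightarrow> j \<le> m \<Longrightarrow> nubar nu j > 0"
  using nubar_strict_mono[of 0 j] by simp

lemma nubar_ge_nu1: "1 \<le> j \<Longrightarrow> j \<le> m \<Longrightarrow> nubar nu j \<ge> nu 1"
  using nubar_mono[of 1 j] by (simp add: nubar_def)

lemma kidx_props: "k \<le> m" "nubar nu k < u" "\<And>j. j \<le> m \<Longrightarrow> nubar nu j < u \<Longrightarrow> j \<le> k"
proof -
  have ex: "0 \<le> m \<and> nubar nu 0 < u" using u_pos by simp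
  have bd: "\<forall>y. y \<le> m \<and> nubar nu y < u \<longrightarrow> y \<le> m" by simp
  show "k \<le> m" "nubar nu k < u" using GreatestI_nat[of "\<lambda>j. j \<le> m \<and> nubar nu j < u", OF ex] bd
    by (auto simp: kidx_def)
  show "\<And>j. j \<le> m \<Longrightarrow> nubar nu j < u \<Longrightarrow> j \<le> k"
    using Greatest_le_nat[of "\<lambda>j. j \<le> m \<and> nubar nu j < u"] by (auto simp: kidx_def)
qed

lemma u_le_nubar_Suc_kidx: "k < m \<Longrightarrow> nubar nu (Suc k) \<ge> u"
  using kidx_props(3)[of "Suc k"] by fastforce

lemma nubar_less_u: "j \<le> k \<Longrightarrow> nubar nu j < u"
  using nubar_mono[of j k] kidx_props by simp

lemma last_link_props:
  "1 \<le> last_link" "last_link \<le> m" "last_link \<le> Suc k" "k \<le> last_link" "last_link \<le> k \<Longrightarrow> k = m"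
  using m_ge_1 kidx_props(1) by (auto simp: last_link_def split: if_splits)

lemma breakpoint_Suc:
  "1 \<le> q \<Longrightarrow> brk (Suc q) = brk q + nubar nu q / (u - nubar nu q) * (tau (Suc q) - tau q)"
  by (cases q) auto

lemma breakpoint_le_Suc:
  assumes "1 \<le> j" "j < last_link"
  shows "brk j \<le> brk (Suc j)"
proof -
  from assms have "j \<le> k" "Suc j \<le> m" using last_link_props by auto
  then have "nubar nu j < u" "nubar nu j > 0" "tau j \<le> tau (Suc j)"
    using nubar_less_u nubar_pos assms tau_mono[of j "Suc j"] by auto
  then show ?thesis using assms by (simp add: breakpoint_Suc)
qed

lemma breakpoint_mono: assumes "1 \<le> j" "j \<le> j'" "j' \<le> last_link" shows "brk j \<le> brk j'"
  using assms(2,3)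
proof (induction j' rule: dec_induct)
  case base then show ?case by simp
next
  case (step n) then show ?case using breakpoint_le_Suc[of n] assms(1) by simp
qed

lemma breakpoint_nonneg: "1 \<le> j \<Longrightarrow> j \<le> last_link \<Longrightarrow> brk j \<ge> 0"
  using breakpoint_mono[of 1 j] by simp

lemma theta_star_eq_breakpoint: "1 \<le> j \<Longrightarrow> j \<le> last_link \<Longrightarrow> ts j = ereal (brk j)"
proof (induction j rule: nat_induct_at_least)
  case base then show ?case by simp
next
  case (Suc n)
  then have "n \<le> k" "Suc n \<le> m" using last_link_props by auto
  then have c: "n \<le> m - 1 \<and> nubar nu n < u" using nubar_less_u by auto
  obtain q where q: "n = Suc q" using Suc by (cases n) auto
  show ?case using Suc c by (simp add: q)
qed

lemma theta_star_Suc_kidx: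
  assumes "k = m"
  shows "ts (Suc k) = \<infinity>"
proof -
  from assms obtain q where q: "k = Suc q" using m_ge_1 by (cases k) auto
  then show ?thesis using \<open>k = m\<close> by simp
qed

lemma theta_star_mono: "1 \<le> j \<Longrightarrow> j \<le> j' \<Longrightarrow> j' \<le> Suc k \<Longrightarrow> ts j \<le> ts j'"
proof (cases "j' \<le> last_link")
  case True
  assume "1 \<le> j" "j \<le> j'"
  then show ?thesis
    using True theta_star_eq_breakpoint[of j] theta_star_eq_breakpoint[of j'] breakpoint_mono[of j j']
    by simp
next
  case False
  assume "j' \<le> Suc k"
  then have "j' = Suc k" "k = m"
    using False last_link_props by (auto simp: last_link_def split: if_splits)
  then show ?thesis using theta_star_Suc_kidx by simp
qed

lemma slope_pos:
  assumes "1 \<le> l" "l \<le> k"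
  shows "slope l > 0"
proof -
  from assms have "nubar nu l < u" "nubar nu l > 0" using nubar_less_u nubar_pos kidx_props by auto
  then show ?thesis using assms by (simp add: slope_def field_simps)
qed

lemma slope_nonneg: "1 \<le> l \<Longrightarrow> slope l \<ge> 0"
  using slope_pos[of l] by (cases "l \<le> k") (auto simp: slope_def)

lemma slope_le:
  assumes "1 \<le> l" "l \<le> m"
  shows "slope l \<le> u / nu 1"
proof (cases "l \<le> k")
  case True
  have "nu 1 > 0" using nu_pos m_ge_1 by auto
  then have "u / nubar nu l \<le> u / nu 1" using nubar_ge_nu1[OF assms] u_pos
    by (intro divide_left_mono) auto
  then show ?thesis using True by (simp add: slope_def)
next
  case False
  then show ?thesis using nu_pos[of 1] m_ge_1 u_pos by (simp add: slope_def)
qed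

lemma travel_line_Suc:
  assumes "1 \<le> q" "q \<le> k"
  shows "travel_line q \<theta> = tau (Suc q) + slope q * (\<theta> - brk (Suc q))"
proof -
  from assms have "nubar nu q < u" "nubar nu q > 0" using nubar_less_u nubar_pos kidx_props by auto
  then show ?thesis using assms
    by (simp add: travel_line_def slope_def breakpoint_Suc field_simps)
qed

lemma slope_Suc_less:
  assumes "1 \<le> q" "Suc q \<le> last_link"
  shows "slope (Suc q) < slope q"
proof -
  from assms have qk: "q \<le> k" using last_link_props by simp
  show ?thesis
  proof (cases "Suc q \<le> k")
    case True
    then have "nubar nu q < nubar nu (Suc q)" "nubar nu q > 0"
      using nubar_strict_mono[of q "Suc q"] nubar_pos[of q] assms kidx_props by auto
    then have "u / nubar nu (Suc q) < u / nubar nu q"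
      using u_pos by (simp add: divide_strict_left_mono)
    then show ?thesis using True by (simp add: slope_def)
  next
    case False
    then show ?thesis using slope_pos[OF assms(1) qk] by (simp add: slope_def)
  qed
qed

lemma travel_line_diff:
  assumes "1 \<le> q" "Suc q \<le> last_link"
  shows "travel_line q \<theta> - travel_line (Suc q) \<theta> = (slope q - slope (Suc q)) * (\<theta> - brk (Suc q))"
  using assms travel_line_Suc[of q \<theta>] last_link_props by (simp add: travel_line_def algebra_simps)

lemma travel_line_Suc_le:
  assumes "1 \<le> q" "Suc q \<le> last_link" "brk (Suc q) \<le> \<theta>"
  shows "travel_line (Suc q) \<theta> \<le> travel_line q \<theta>"
  using assms travel_line_diff[of q \<theta>] slope_Suc_less[of q] by (smt (verit) mult_nonneg_nonneg)

lemma travel_line_le_Suc: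
  assumes "1 \<le> q" "Suc q \<le> last_link" "\<theta> \<le> brk (Suc q)"
  shows "travel_line q \<theta> \<le> travel_line (Suc q) \<theta>"
  using assms travel_line_diff[of q \<theta>] slope_Suc_less[of q] by (smt (verit) mult_nonneg_nonpos)

lemma travel_line_le_later:
  assumes "1 \<le> j" "j \<le> l" "l \<le> last_link" and before: "Suc j \<le> last_link \<Longrightarrow> \<theta> \<le> brk (Suc j)"
  shows "travel_line j \<theta> \<le> travel_line l \<theta>"
  using assms(2,3)
proof (induction l rule: dec_induct)
  case (step n)
  have "brk (Suc j) \<le> brk (Suc n)" using breakpoint_mono[of "Suc j" "Suc n"] step assms(1) by simp
  then have "\<theta> \<le> brk (Suc n)" using before step by simp
  then show ?case using travel_line_le_Suc[of n \<theta>] step assms(1) by simp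
qed simp

lemma travel_line_le_earlier:
  assumes "1 \<le> l" "l \<le> j" "j \<le> last_link" and after: "brk j \<le> \<theta>"
  shows "travel_line j \<theta> \<le> travel_line l \<theta>"
  using assms(2)
proof (induction l rule: inc_induct)
  case (step n)
  have "1 \<le> n" using step assms(1) by simp
  have "brk (Suc n) \<le> brk j" using breakpoint_mono[of "Suc n" j] step assms(3) by simp
  then have "travel_line (Suc n) \<theta> \<le> travel_line n \<theta>"
    using travel_line_Suc_le[OF \<open>1 \<le> n\<close>] step assms(3) after by simp
  then show ?case using step by simp
qed simp

lemma delay_eq:
  assumes "1 \<le> j" "j \<le> last_link" "brk j \<le> \<theta>" "Suc j \<le> last_link \<Longrightarrow> \<theta> \<le> brk (Suc j)"
  shows "delay \<theta> = travel_line j \<theta>"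
  unfolding delay_def
proof (rule Min_eqI)
  fix y assume "y \<in> (\<lambda>l. travel_line l \<theta>) ` {1..last_link}"
  then obtain l where "l \<in> {1..last_link}" "y = travel_line l \<theta>" by blast
  then show "travel_line j \<theta> \<le> y"
    using travel_line_le_later[of j l \<theta>] travel_line_le_earlier[of l j \<theta>] assms
    by (cases "j \<le> l") auto
qed (use assms in auto)

lemma delay_attained: "\<exists>l\<in>{1..last_link}. delay \<theta> = travel_line l \<theta>"
proof -
  have "delay \<theta> \<in> (\<lambda>l. travel_line l \<theta>) ` {1..last_link}"
    unfolding delay_def using last_link_props by (intro Min_in) auto
  then show ?thesis by auto
qed

lemma delay_le: "l \<in> {1..last_link} \<Longrightarrow> delay \<theta> \<le> travel_line l \<theta>"
  unfolding delay_def by (rule Min_le) auto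

lemma delay_mono:
  assumes "\<theta> \<le> \<theta>'"
  shows "delay \<theta> \<le> delay \<theta>'"
proof -
  obtain l where l: "l \<in> {1..last_link}" "delay \<theta>' = travel_line l \<theta>'" using delay_attained by blast
  have "travel_line l \<theta> \<le> travel_line l \<theta>'"
    using slope_nonneg[of l] l assms by (simp add: travel_line_def mult_left_mono)
  then show ?thesis using delay_le[OF l(1), of \<theta>] l by simp
qed

lemma delay_Lipschitz:
  assumes "\<theta> \<le> \<theta>'"
  shows "delay \<theta>' \<le> delay \<theta> + u / nu 1 * (\<theta>' - \<theta>)"
proof -
  obtain l where l: "l \<in> {1..last_link}" "delay \<theta> = travel_line l \<theta>" using delay_attained by blast
  have "slope l \<le> u / nu 1" using slope_le[of l] l last_link_props by auto
  then have "slope l * (\<theta>' - \<theta>) \<le> u / nu 1 * (\<theta>' - \<theta>)" using assms by (intro mult_right_mono) auto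
  then have "travel_line l \<theta>' \<le> travel_line l \<theta> + u / nu 1 * (\<theta>' - \<theta>)"
    by (simp add: travel_line_def algebra_simps)
  then show ?thesis using delay_le[OF l(1), of \<theta>'] l by simp
qed

lemma delay_Lipschitz_abs: "\<bar>delay x - delay y\<bar> \<le> u / nu 1 * \<bar>x - y\<bar>"
  using delay_Lipschitz[of x y] delay_Lipschitz[of y x] delay_mono[of x y] delay_mono[of y x]
  by (cases "x \<le> y") (auto simp: abs_if algebra_simps)

lemma delay_0: "delay 0 = tau 1"
proof -
  have "brk 1 \<le> 0" by simp
  moreover have "0 \<le> brk (Suc 1)" if "Suc 1 \<le> last_link"
    by (rule breakpoint_nonneg) (use that in auto)
  ultimately have "delay 0 = travel_line 1 0" using delay_eq[of 1 0] last_link_props by simp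
  then show ?thesis by (simp add: travel_line_def)
qed

lemma tau1_le_delay: "0 \<le> \<theta> \<Longrightarrow> tau 1 \<le> delay \<theta>"
  using delay_mono[of 0 \<theta>] delay_0 by simp

lemma canonical_flow_unfold: "flow i \<theta> =
   (if 1 \<le> i \<and> i \<le> k \<and> (\<exists>j\<in>{i..k}. ts j \<le> ereal \<theta> \<and> ereal \<theta> < ts (Suc j))
      then u / nubar nu (THE j. j \<in> {i..k} \<and> ts j \<le> ereal \<theta> \<and> ereal \<theta> < ts (Suc j)) * nu i
    else if 1 \<le> i \<and> i \<le> k \<and> ts (Suc k) \<le> ereal \<theta> then nu i
    else if i = Suc k \<and> k < m \<and> ts (Suc k) \<le> ereal \<theta> then u - nubar nu k
    else 0)"
  by (simp add: canonical_flow_def Let_def)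

definition phase :: "nat \<Rightarrow> real \<Rightarrow> bool" where
  "phase j \<theta> \<longleftrightarrow> ts j \<le> ereal \<theta> \<and> ereal \<theta> < ts (Suc j)"

definition saturated :: "real \<Rightarrow> bool" where
  "saturated \<theta> \<longleftrightarrow> k < m \<and> ts (Suc k) \<le> ereal \<theta>"

lemma phase_disjoint:
  assumes "1 \<le> j" "j < j'" "j' \<le> k" "phase j \<theta>"
  shows "\<not> phase j' \<theta>"
proof
  assume "phase j' \<theta>"
  have "ts (Suc j) \<le> ts j'" using theta_star_mono[of "Suc j" j'] assms by simp
  then show False using assms \<open>phase j' \<theta>\<close> by (auto simp: phase_def)
qed

lemma phase_unique: "j \<in> {1..k} \<Longrightarrow> j' \<in> {1..k} \<Longrightarrow> phase j \<theta> \<Longrightarrow> phase j' \<theta> \<Longrightarrow> j = j'"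
  using phase_disjoint[of j j' \<theta>] phase_disjoint[of j' j \<theta>] by (cases j j' rule: linorder_cases) auto

lemma phase_not_saturated:
  assumes "j \<in> {1..k}" "phase j \<theta>"
  shows "\<not> saturated \<theta>"
proof
  assume "saturated \<theta>"
  have "ts (Suc j) \<le> ts (Suc k)" using theta_star_mono[of "Suc j" "Suc k"] assms by simp
  then show False using assms \<open>saturated \<theta>\<close> by (auto simp: phase_def saturated_def)
qed

lemma phase_iff:
  assumes j: "j \<in> {1..k}"
  shows "phase j \<theta> \<longleftrightarrow> brk j \<le> \<theta> \<and> (Suc j \<le> last_link \<longrightarrow> \<theta> < brk (Suc j))"
proof -
  have tsj: "ts j = ereal (brk j)" using j theta_star_eq_breakpoint[of j] last_link_props by auto
  show ?thesis
  proof (cases "Suc j \<le> last_link")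
    case True
    then have "ts (Suc j) = ereal (brk (Suc j))" using theta_star_eq_breakpoint[of "Suc j"] by simp
    then show ?thesis using tsj True by (simp add: phase_def)
  next
    case False
    then have "j = k" "k = m" using j last_link_props by (auto simp: last_link_def split: if_splits)
    then have "ts (Suc j) = \<infinity>" using theta_star_Suc_kidx by simp
    then show ?thesis using tsj False by (simp add: phase_def)
  qed
qed

lemma saturated_iff: "saturated \<theta> \<longleftrightarrow> k < m \<and> brk (Suc k) \<le> \<theta>"
proof (cases "k < m")
  case True
  then have "Suc k \<le> last_link" by (simp add: last_link_def)
  then have "ts (Suc k) = ereal (brk (Suc k))" using theta_star_eq_breakpoint[of "Suc k"] by simp
  then show ?thesis using True by (simp add: saturated_def)
qed (simp add: saturated_def)

lemma phase_or_saturated: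
  assumes t: "0 \<le> \<theta>"
  shows "(\<exists>j\<in>{1..k}. phase j \<theta>) \<or> saturated \<theta>"
proof (rule disjCI)
  assume nst: "\<not> saturated \<theta>"
  have lt: "ereal \<theta> < ts (Suc k)"
  proof (cases "k < m")
    case True then show ?thesis using nst by (auto simp: saturated_def)
  next
    case False then show ?thesis using theta_star_Suc_kidx kidx_props by simp
  qed
  have k1: "1 \<le> k"
  proof (rule ccontr)
    assume "\<not> 1 \<le> k"
    then have "k = 0" by simp
    then show False using lt t by simp
  qed
  let ?P = "\<lambda>j. j \<in> {1..k} \<and> ts j \<le> ereal \<theta>"
  have ex: "?P 1" using k1 t by simp
  define j where "j = (GREATEST j. ?P j)"
  have Pj: "?P j" unfolding j_def by (rule GreatestI_nat[where P="?P" and k=1 and b=k, OF ex]) simp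
  have "ereal \<theta> < ts (Suc j)"
  proof (cases "j = k")
    case True then show ?thesis using lt by simp
  next
    case False
    then have "Suc j \<in> {1..k}" using Pj by auto
    moreover have "\<not> ?P (Suc j)"
    proof
      assume "?P (Suc j)"
      then have "Suc j \<le> j" unfolding j_def by (rule Greatest_le_nat[where P="?P" and b=k]) simp
      then show False by simp
    qed
    ultimately show ?thesis by auto
  qed
  then show "\<exists>j\<in>{1..k}. phase j \<theta>" using Pj by (auto simp: phase_def)
qed

lemma canonical_flow_phase_le:
  assumes "j \<in> {1..k}" "phase j \<theta>" "1 \<le> i" "i \<le> j"
  shows "flow i \<theta> = u / nubar nu j * nu i"
proof -
  have ex: "\<exists>j\<in>{i..k}. ts j \<le> ereal \<theta> \<and> ereal \<theta> < ts (Suc j)" using assms by (auto simp: phase_def)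
  have the: "(THE j. j \<in> {i..k} \<and> ts j \<le> ereal \<theta> \<and> ereal \<theta> < ts (Suc j)) = j"
  proof (rule the_equality)
    show "j \<in> {i..k} \<and> ts j \<le> ereal \<theta> \<and> ereal \<theta> < ts (Suc j)" using assms by (auto simp: phase_def)
    fix j' assume "j' \<in> {i..k} \<and> ts j' \<le> ereal \<theta> \<and> ereal \<theta> < ts (Suc j')"
    then show "j' = j" using phase_unique[of j' j \<theta>] assms by (auto simp: phase_def)
  qed
  show ?thesis using assms ex the by (subst canonical_flow_unfold) auto
qed

lemma canonical_flow_phase_gt:
  assumes "j \<in> {1..k}" "phase j \<theta>" "j < i"
  shows "flow i \<theta> = 0"
proof -
  have n1: "\<not> (\<exists>j'\<in>{i..k}. ts j' \<le> ereal \<theta> \<and> ereal \<theta> < ts (Suc j'))"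
  proof
    assume "\<exists>j'\<in>{i..k}. ts j' \<le> ereal \<theta> \<and> ereal \<theta> < ts (Suc j')"
    then obtain j' where "j' \<in> {i..k}" "phase j' \<theta>" by (auto simp: phase_def)
    then show False using phase_unique[of j j' \<theta>] assms by auto
  qed
  have n2: "\<not> ts (Suc k) \<le> ereal \<theta>"
  proof -
    have "ts (Suc j) \<le> ts (Suc k)" using theta_star_mono[of "Suc j" "Suc k"] assms by simp
    then show ?thesis using assms by (auto simp: phase_def)
  qed
  show ?thesis using n1 n2 by (subst canonical_flow_unfold) auto
qed

lemma canonical_flow_saturated_le:
  assumes "saturated \<theta>" "1 \<le> i" "i \<le> k"
  shows "flow i \<theta> = nu i"
proof -
  have n1: "\<not> (\<exists>j'\<in>{i..k}. ts j' \<le> ereal \<theta> \<and> ereal \<theta> < ts (Suc j'))"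
  proof
    assume "\<exists>j'\<in>{i..k}. ts j' \<le> ereal \<theta> \<and> ereal \<theta> < ts (Suc j')"
    then obtain j' where "j' \<in> {i..k}" "phase j' \<theta>" by (auto simp: phase_def)
    then show False using phase_not_saturated[of j' \<theta>] assms by auto
  qed
  show ?thesis using n1 assms by (subst canonical_flow_unfold) (auto simp: saturated_def)
qed

lemma canonical_flow_saturated_Suc_kidx: "saturated \<theta> \<Longrightarrow> flow (Suc k) \<theta> = u - nubar nu k"
  by (subst canonical_flow_unfold) (auto simp: saturated_def)

lemma canonical_flow_gt_Suc_kidx: "Suc k < i \<Longrightarrow> flow i \<theta> = 0"
  by (subst canonical_flow_unfold) auto

lemma delay_phase: "j \<in> {1..k} \<Longrightarrow> phase j \<theta> \<Longrightarrow> delay \<theta> = travel_line j \<theta>"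
  using phase_iff[of j \<theta>] last_link_props by (intro delay_eq) auto

lemma delay_saturated:
  assumes "saturated \<theta>"
  shows "delay \<theta> = tau (Suc k)"
proof -
  from assms have "k < m" "brk (Suc k) \<le> \<theta>" using saturated_iff by auto
  then have "last_link = Suc k" by (simp add: last_link_def)
  then have "delay \<theta> = travel_line (Suc k) \<theta>" using \<open>brk (Suc k) \<le> \<theta>\<close> by (intro delay_eq) auto
  then show ?thesis by (simp add: travel_line_def slope_def)
qed

lemma tau_le_delay_if_flow_pos:
  assumes "0 \<le> \<theta>" "i \<in> {1..m}" "flow i \<theta> > 0"
  shows "tau i \<le> delay \<theta>"
proof -
  from phase_or_saturated[OF assms(1)] show ?thesis
  proof
    assume "\<exists>j\<in>{1..k}. phase j \<theta>"
    then obtain j where j: "j \<in> {1..k}" "phase j \<theta>" by blast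
    have "i \<le> j" using canonical_flow_phase_gt[OF j, of i] assms by (cases "j < i") auto
    then have "tau i \<le> tau j" using tau_mono[of i j] assms j kidx_props by auto
    moreover have "tau j \<le> travel_line j \<theta>" using slope_nonneg[of j] j phase_iff[of j \<theta>]
      by (auto simp: travel_line_def)
    ultimately show ?thesis using delay_phase[OF j] by simp
  next
    assume s: "saturated \<theta>"
    have "i \<le> Suc k" using canonical_flow_gt_Suc_kidx[of i \<theta>] assms by (cases "Suc k < i") auto
    then have "tau i \<le> tau (Suc k)"
      using tau_mono[of i "Suc k"] assms s by (auto simp: saturated_def)
    then show ?thesis using delay_saturated[OF s] by simp
  qed
qed

lemma canonical_flow_1_pos:
  assumes "0 \<le> \<theta>"
  shows "flow 1 \<theta> > 0"
proof -
  have nu1: "nu 1 > 0" using nu_pos m_ge_1 by auto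
  from phase_or_saturated[OF assms] show ?thesis
  proof
    assume "\<exists>j\<in>{1..k}. phase j \<theta>"
    then obtain j where j: "j \<in> {1..k}" "phase j \<theta>" by blast
    have "nubar nu j > 0" using nubar_pos[of j] j kidx_props by auto
    then show ?thesis using canonical_flow_phase_le[OF j, of 1] j nu1 u_pos by simp
  next
    assume s: "saturated \<theta>"
    show ?thesis
    proof (cases "k = 0")
      case True
      then show ?thesis using canonical_flow_saturated_Suc_kidx[OF s] u_pos by simp
    next
      case False
      then show ?thesis using canonical_flow_saturated_le[OF s, of 1] nu1 by simp
    qed
  qed
qed

lemma queue_Lipschitz: "i \<in> {1..m} \<Longrightarrow> \<bar>queue i x - queue i y\<bar> \<le> nu i * (u / nu 1) * \<bar>x - y\<bar>"
proof -
  assume i: "i \<in> {1..m}"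
  have nui: "nu i > 0" using nu_pos i by simp
  have "\<bar>max 0 (delay x - tau i) - max 0 (delay y - tau i)\<bar> \<le> \<bar>delay x - delay y\<bar>"
    by (simp add: max_def abs_if)
  also have "\<dots> \<le> u / nu 1 * \<bar>x - y\<bar>" by (rule delay_Lipschitz_abs)
  finally have "nu i * \<bar>max 0 (delay x - tau i) - max 0 (delay y - tau i)\<bar>
      \<le> nu i * (u / nu 1 * \<bar>x - y\<bar>)"
    using nui by (intro mult_left_mono) auto
  then show ?thesis
    using nui by (simp add: queue_def abs_mult right_diff_distrib[symmetric] mult.assoc)
qed

lemma queue_law_phase:
  assumes j: "j \<in> {1..k}" "phase j \<theta>" and "brk j < \<theta>" and i: "i \<in> {1..m}"
  shows "queue_law (nu i) (flow i \<theta>) (queue i) \<theta>"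
proof -
  define S where "S = (if Suc j \<le> last_link then {brk j<..<brk (Suc j)} else {brk j<..})"
  have "open S" by (simp add: S_def)
  have "\<theta> \<in> S" using phase_iff[OF j(1)] j(2) \<open>brk j < \<theta>\<close> by (auto simp: S_def)
  have in_S: "delay y = travel_line j y" "brk j < y" "Suc j \<le> last_link \<Longrightarrow> y < brk (Suc j)"
    if "y \<in> S" for y
    using that phase_iff[OF j(1), of y] delay_phase[OF j(1)] by (auto simp: S_def split: if_splits)
  have jk: "1 \<le> j" "j \<le> k" and "slope j > 0" using j slope_pos by auto
  have "nu i > 0" using nu_pos i by simp
  show ?thesis
  proof (cases "i \<le> j")
    case True
    have "tau i \<le> tau j" using tau_mono[of i j] True i jk kidx_props by auto
    have queue_S: "queue i y = nu i * (travel_line j y - tau i)" if "y \<in> S" for y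
    proof -
      have "tau j < travel_line j y" using in_S[OF that] \<open>slope j > 0\<close> by (simp add: travel_line_def)
      then show ?thesis using in_S(1)[OF that] \<open>tau i \<le> tau j\<close> by (simp add: queue_def)
    qed
    have affine: "queue i y = queue i \<theta> + nu i * slope j * (y - \<theta>)" if "y \<in> S" for y
      using queue_S[OF that] queue_S[OF \<open>\<theta> \<in> S\<close>] by (simp add: travel_line_def algebra_simps)
    have "slope j * (\<theta> - brk j) > 0" using \<open>slope j > 0\<close> \<open>brk j < \<theta>\<close> by simp
    then have "travel_line j \<theta> - tau i > 0" using \<open>tau i \<le> tau j\<close> by (simp add: travel_line_def)
    then have "queue i \<theta> > 0" using queue_S[OF \<open>\<theta> \<in> S\<close>] \<open>nu i > 0\<close> by simp
    moreover have "flow i \<theta> - nu i = nu i * slope j"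
      using canonical_flow_phase_le[OF j] True i jk by (simp add: slope_def algebra_simps)
    ultimately show ?thesis
      by (intro queue_law_locally_affine[OF \<open>open S\<close> \<open>\<theta> \<in> S\<close> affine]) simp_all
  next
    case False
    have "Suc j \<le> last_link" using False i jk by (auto simp: last_link_def)
    have "tau (Suc j) \<le> tau i" using tau_mono[of "Suc j" i] False i by auto
    have vanish: "queue i y = 0" if "y \<in> S" for y
    proof -
      have "travel_line j y < tau (Suc j)"
        using in_S(3)[OF that \<open>Suc j \<le> last_link\<close>] travel_line_Suc[OF jk] \<open>slope j > 0\<close>
        by (simp add: mult_pos_neg)
      then show ?thesis using in_S(1)[OF that] \<open>tau (Suc j) \<le> tau i\<close> by (simp add: queue_def)
    qed
    moreover have "flow i \<theta> = 0" using canonical_flow_phase_gt[OF j] False by simp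
    ultimately show ?thesis using \<open>\<theta> \<in> S\<close> \<open>nu i > 0\<close>
      by (intro queue_law_locally_affine[OF \<open>open S\<close> \<open>\<theta> \<in> S\<close>, where d = 0]) simp_all
  qed
qed

lemma queue_law_saturated:
  assumes "saturated \<theta>" and "brk (Suc k) < \<theta>" and i: "i \<in> {1..m}"
  shows "queue_law (nu i) (flow i \<theta>) (queue i) \<theta>"
proof -
  have "k < m" using \<open>saturated \<theta>\<close> saturated_iff by simp
  have "nu i > 0" using nu_pos i by simp
  have const: "queue i y = queue i \<theta> + 0 * (y - \<theta>)" if "y \<in> {brk (Suc k)<..}" for y
    using that \<open>k < m\<close> \<open>saturated \<theta>\<close> saturated_iff[of y] by (simp add: queue_def delay_saturated)
  have "flow i \<theta> \<le> nu i"
    using canonical_flow_saturated_le[OF \<open>saturated \<theta>\<close>, of i] canonical_flow_gt_Suc_kidx[of i \<theta>]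
      canonical_flow_saturated_Suc_kidx[OF \<open>saturated \<theta>\<close>] u_le_nubar_Suc_kidx[OF \<open>k < m\<close>]
      nubar_Suc[of nu k] i \<open>nu i > 0\<close>
    by (cases "i \<le> k"; cases "i = Suc k") auto
  moreover have "flow i \<theta> = nu i" if "queue i \<theta> > 0"
  proof -
    have "tau i < tau (Suc k)"
      using that \<open>nu i > 0\<close> delay_saturated[OF \<open>saturated \<theta>\<close>]
      by (simp add: queue_def zero_less_mult_iff)
    then have "i \<le> k" using tau_mono[of "Suc k" i] \<open>k < m\<close> i by (cases "i \<le> k") auto
    then show ?thesis using canonical_flow_saturated_le[OF \<open>saturated \<theta>\<close>] i by simp
  qed
  moreover have "\<theta> \<in> {brk (Suc k)<..}" using \<open>brk (Suc k) < \<theta>\<close> by simp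
  ultimately show ?thesis
    by (intro queue_law_locally_affine[OF open_greaterThan _ const]) auto
qed

lemma queue_law_canonical:
  assumes "\<theta> > 0" and "\<theta> \<notin> brk ` {1..Suc k}" and "i \<in> {1..m}"
  shows "queue_law (nu i) (flow i \<theta>) (queue i) \<theta>"
proof -
  have "(\<exists>j\<in>{1..k}. phase j \<theta>) \<or> saturated \<theta>" using phase_or_saturated assms(1) by simp
  then show ?thesis
  proof (elim disjE bexE)
    fix j assume j: "j \<in> {1..k}" "phase j \<theta>"
    then have "brk j < \<theta>" using phase_iff[OF j(1)] assms(2) by force
    then show ?thesis using queue_law_phase[OF j _ assms(3)] by blast
  next
    assume "saturated \<theta>"
    then have "brk (Suc k) < \<theta>" using saturated_iff assms(2) by force
    then show ?thesis using queue_law_saturated[OF \<open>saturated \<theta>\<close> _ assms(3)] by blast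
  qed
qed

lemma is_queue_canonical:
  assumes i: "i \<in> {1..m}"
  shows "is_queue (nu i) (flow i) (queue i)"
  unfolding is_queue_iff
proof (intro conjI allI impI)
  have "nu i > 0" "tau 1 \<le> tau i" using nu_pos tau_mono[of 1 i] i by auto
  then show "queue i 0 = 0" "\<And>\<theta>. 0 \<le> queue i \<theta>" by (simp_all add: queue_def delay_0)
  show "abs_cont_on 0 b (queue i)" for b
    using \<open>nu i > 0\<close> u_pos nu_pos[of 1] m_ge_1 queue_Lipschitz[OF i]
    by (intro abs_cont_on_lipschitz[of "nu i * (u / nu 1)"]) auto
  show "AE \<theta> in lborel. 0 < \<theta> \<longrightarrow> queue_law (nu i) (flow i \<theta>) (queue i) \<theta>"
    using queue_law_canonical[OF _ _ i]
    by (intro AE_I'[OF finite_imp_null_set_lborel[of "brk ` {1..Suc k}"]]) auto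
qed

lemma exit_time_canonical:
  assumes "\<forall>i\<in>{1..m}. is_queue (nu i) (flow i) (z i)" and "i \<in> {1..m}" and "0 \<le> \<theta>"
  shows "exit_time nu tau z i \<theta> = \<theta> + max (delay \<theta>) (tau i)"
proof -
  have "z i \<theta> = queue i \<theta>" using is_queue_unique is_queue_canonical assms by blast
  moreover have "nu i > 0" using nu_pos assms(2) by simp
  ultimately show ?thesis by (simp add: exit_time_def queue_def max_def)
qed

lemma exit_times_at_Min:
  assumes z: "\<forall>i\<in>{1..m}. is_queue (nu i) (flow i) (z i)" and "0 \<le> T"
  defines "E \<equiv> \<lambda>i. exit_time nu tau z i T"
  shows "E ` {i\<in>{1..m}. E i = Min (E ` {1..m})} = {T + delay T}"
proof -
  have "1 \<in> {1..m}" using m_ge_1 by simp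
  have E: "E i = T + max (delay T) (tau i)" if "i \<in> {1..m}" for i
    using exit_time_canonical[OF z that \<open>0 \<le> T\<close>] by (simp add: E_def)
  have "E 1 = T + delay T" using E[OF \<open>1 \<in> {1..m}\<close>] tau1_le_delay[OF \<open>0 \<le> T\<close>] by simp
  moreover have "Min (E ` {1..m}) = T + delay T"
    using E \<open>E 1 = T + delay T\<close> \<open>1 \<in> {1..m}\<close> by (intro Min_eqI) force+
  ultimately show ?thesis using \<open>1 \<in> {1..m}\<close> by force
qed

lemma makespan_canonical:
  assumes z: "\<forall>i\<in>{1..m}. is_queue (nu i) (flow i) (z i)" and "0 \<le> T"
  shows "makespan m nu tau flow z T = ereal (T + delay T)"
  unfolding makespan_def
proof (rule antisym)
  show "Sup {ereal (exit_time nu tau z i \<theta>) |i \<theta>. i \<in> {1..m} \<and> \<theta> \<in> {0..T} \<and> 0 < flow i \<theta>}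
      \<le> ereal (T + delay T)"
  proof (rule Sup_least, clarify)
    fix i \<theta> assume i: "i \<in> {1..m}" and "\<theta> \<in> {0..T}" "0 < flow i \<theta>"
    then have "tau i \<le> delay \<theta>" "delay \<theta> \<le> delay T"
      using tau_le_delay_if_flow_pos delay_mono by auto
    then show "ereal (exit_time nu tau z i \<theta>) \<le> ereal (T + delay T)"
      using exit_time_canonical[OF z i] \<open>\<theta> \<in> {0..T}\<close> by simp
  qed
  have "1 \<in> {1..m}" using m_ge_1 by simp
  then have "ereal (T + delay T) = ereal (exit_time nu tau z 1 T)"
    using exit_time_canonical[OF z _ \<open>0 \<le> T\<close>] tau1_le_delay[OF \<open>0 \<le> T\<close>] by simp
  with \<open>1 \<in> {1..m}\<close> \<open>0 \<le> T\<close> canonical_flow_1_pos[OF \<open>0 \<le> T\<close>]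
  show "ereal (T + delay T)
      \<le> Sup {ereal (exit_time nu tau z i \<theta>) |i \<theta>. i \<in> {1..m} \<and> \<theta> \<in> {0..T} \<and> 0 < flow i \<theta>}"
    by (intro Sup_upper) auto
qed

end

theorem mainTheorem2:
  fixes m :: nat and nu tau :: "nat \<Rightarrow> real" and u T :: real
  assumes "m \<ge> 1"
    and "\<forall>i\<in>{1..m}. nu i \<in> \<rat> \<and> nu i > 0"
    and "u \<in> \<rat>" and "u > 0"
    and "\<forall>i\<in>{1..m}. tau i \<ge> 0"
    and "\<forall>i j. 1 \<le> i \<and> i \<le> j \<and> j \<le> m \<longrightarrow> tau i \<le> tau j"
    and "T > 0"
  defines "f \<equiv> canonical_flow m nu tau u"
  shows "(\<exists>z. \<forall>i\<in>{1..m}. is_queue (nu i) (f i) (z i)) \<and>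
         (\<forall>z. (\<forall>i\<in>{1..m}. is_queue (nu i) (f i) (z i)) \<longrightarrow>
            (let S = {i\<in>{1..m}. exit_time nu tau z i T =
                        Min ((\<lambda>j. exit_time nu tau z j T) ` {1..m})}
             in makespan m nu tau f z T = ereal (Max ((\<lambda>i. exit_time nu tau z i T) ` S))))"
proof -
  interpret parallel_links m nu tau u
    by unfold_locales (use assms in auto)
  have "\<exists>z. \<forall>i\<in>{1..m}. is_queue (nu i) (f i) (z i)"
    using is_queue_canonical unfolding f_def by blast
  moreover have "makespan m nu tau f z T = ereal (Max ((\<lambda>i. exit_time nu tau z i T) ` S))"
    if "\<forall>i\<in>{1..m}. is_queue (nu i) (f i) (z i)"
      and "S = {i\<in>{1..m}. exit_time nu tau z i T = Min ((\<lambda>j. exit_time nu tau z j T) ` {1..m})}"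
    for z S
    using that makespan_canonical exit_times_at_Min \<open>T > 0\<close> unfolding f_def by simp
  ultimately show ?thesis by (simp add: Let_def)
qed

end
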